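(* Let $(G,+)$ be an abelian group with identity $0$. Let $M=(E,\mathcal{I})$ and $N=(E',\mathcal{I}')$ be two transversal matroids over $G$ with partitions $\{E_i\}_{i\in[n]}$ of $E$ and $\{E'_i\}_{i\in[n]}$ of $E'$, respectively, such that $|E_i|=|E'_i|$ for all $i$. Assume there exists a total order $\preceq$ on $E\cup E'\cup(E+E')\cup\{0\}$ compatible with the group structure of $G$ such that: (1) there exists $k\in[n]$ such that (a) $E_i$ and $E'_i$ are negative when $i<k$ and positive otherwise; (b) $E_k=-E'_k=\{-a: a\in E'_k\}$; (c) $|E_i|>|E_j|$ whenever $k<i<j$ or $j<i<k$; (2) for all $i<j$, $E_i\prec E_j$ and $E'_i\prec E'_j$; (3) $\max E\preceq \max E'$ and $\min E'\preceq \min E$. Then $M$ is matched to $N$. Furthermore, if $k=1$ then the condition $\min E'\preceq\min E$ can be removed, and if $k=n$ then the condition $\max E\preceq \max E'$ can be removed.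
   Context: Given a partition of a finite set $E$ into disjoint sets $E_1,\dots,E_l$, the transversal matroid on $E$ has as independent sets those $X\subseteq E$ with $|X\cap E_i|\le 1$ for all $i$. A matroid over $G$ is a matroid whose finite ground set is a subset of $G$. $E+E'=\{a+b: a\in E, b\in E'\}$. A total order $\preceq$ on $A\subseteq G$ is compatible with the group structure if for all $a,b,c\in A$, $a\preceq b$ implies $a+c\preceq b+c$. An element $x$ is positive if $0\prec x$ and negative if $x\prec 0$; a set is positive (negative) if all its elements are. For sets $A,B$, $A\prec B$ means $a\prec b$ for all $a\in A$, $b\in B$ (where $\prec$ means $\preceq$ and $\ne$). For matroids $M,N$ over $G$ with $r(M)=r(N)=n>0$ and bases $\mathcal{M}=\{a_1,\dots,a_n\}$ of $M$ and $\mathcal{N}=\{b_1,\dots,b_n\}$ of $N$, $\mathcal{M}$ is matched to $\mathcal{N}$ if there is a permutation $\pi\in S_n$ with $a_i+b_{\pi(i)}\notin E(M)$ for all $i$. $M$ is matched to $N$ if for every basis $\mathcal{M}$ of $M$ there exists a basis $\mathcal{N}$ of $N$ such that $\mathcal{M}$ is matched to $\mathcal{N}$. *)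

theory Defs
  imports Main
begin

definition tm_ground :: "nat \<Rightarrow> (nat \<Rightarrow> 'a set) \<Rightarrow> 'a set" where
  "tm_ground n P = (\<Union>i\<in>{1..n}. P i)"

definition tm_indep :: "nat \<Rightarrow> (nat \<Rightarrow> 'a set) \<Rightarrow> 'a set \<Rightarrow> bool" where
  "tm_indep n P X \<longleftrightarrow> X \<subseteq> tm_ground n P \<and> (\<forall>i\<in>{1..n}. card (X \<inter> P i) \<le> 1)"

definition tm_basis :: "nat \<Rightarrow> (nat \<Rightarrow> 'a set) \<Rightarrow> 'a set \<Rightarrow> bool" where
  "tm_basis n P B \<longleftrightarrow> tm_indep n P B \<and> (\<forall>Y. tm_indep n P Y \<and> B \<subseteq> Y \<longrightarrow> Y = B)"

definition tm_rank :: "nat \<Rightarrow> (nat \<Rightarrow> 'a set) \<Rightarrow> nat" where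
  "tm_rank n P = Max (card ` {X. tm_indep n P X})"

definition tm_matched ::
  "nat \<Rightarrow> (nat \<Rightarrow> 'a::ab_group_add set) \<Rightarrow> nat \<Rightarrow> (nat \<Rightarrow> 'a set) \<Rightarrow> bool" where
  "tm_matched n P m Q \<longleftrightarrow>
     tm_rank n P = tm_rank m Q \<and> tm_rank n P > 0 \<and>
     (\<forall>B. tm_basis n P B \<longrightarrow>
        (\<exists>B' f. tm_basis m Q B' \<and> bij_betw f B B' \<and>
                (\<forall>a\<in>B. a + f a \<notin> tm_ground n P)))"

definition sumset :: "'a::ab_group_add set \<Rightarrow> 'a set \<Rightarrow> 'a set" where
  "sumset A B = {a + b | a b. a \<in> A \<and> b \<in> B}"

text \<open>le is a total order on the set A (the relation le lives on the whole group,
  only its restriction to A is required to be a total order).\<close>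
definition total_order_on :: "'a set \<Rightarrow> ('a \<Rightarrow> 'a \<Rightarrow> bool) \<Rightarrow> bool" where
  "total_order_on A le \<longleftrightarrow>
     (\<forall>x\<in>A. le x x) \<and>
     (\<forall>x\<in>A. \<forall>y\<in>A. le x y \<and> le y x \<longrightarrow> x = y) \<and>
     (\<forall>x\<in>A. \<forall>y\<in>A. \<forall>z\<in>A. le x y \<and> le y z \<longrightarrow> le x z) \<and>
     (\<forall>x\<in>A. \<forall>y\<in>A. le x y \<or> le y x)"

definition compatible_on :: "'a::ab_group_add set \<Rightarrow> ('a \<Rightarrow> 'a \<Rightarrow> bool) \<Rightarrow> bool" where
  "compatible_on A le \<longleftrightarrow> (\<forall>a\<in>A. \<forall>b\<in>A. \<forall>c\<in>A. le a b \<longrightarrow> le (a + c) (b + c))"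

definition strict :: "('a \<Rightarrow> 'a \<Rightarrow> bool) \<Rightarrow> 'a \<Rightarrow> 'a \<Rightarrow> bool" where
  "strict le a b \<longleftrightarrow> le a b \<and> a \<noteq> b"

definition positive_set :: "('a::ab_group_add \<Rightarrow> 'a \<Rightarrow> bool) \<Rightarrow> 'a set \<Rightarrow> bool" where
  "positive_set le X \<longleftrightarrow> (\<forall>x\<in>X. strict le 0 x)"

definition negative_set :: "('a::ab_group_add \<Rightarrow> 'a \<Rightarrow> bool) \<Rightarrow> 'a set \<Rightarrow> bool" where
  "negative_set le X \<longleftrightarrow> (\<forall>x\<in>X. strict le x 0)"

definition set_less :: "('a \<Rightarrow> 'a \<Rightarrow> bool) \<Rightarrow> 'a set \<Rightarrow> 'a set \<Rightarrow> bool" where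
  "set_less le X Y \<longleftrightarrow> (\<forall>a\<in>X. \<forall>b\<in>Y. strict le a b)"

definition ord_max :: "('a \<Rightarrow> 'a \<Rightarrow> bool) \<Rightarrow> 'a set \<Rightarrow> 'a" where
  "ord_max le S = (THE m. m \<in> S \<and> (\<forall>x\<in>S. le x m))"

definition ord_min :: "('a \<Rightarrow> 'a \<Rightarrow> bool) \<Rightarrow> 'a set \<Rightarrow> 'a" where
  "ord_min le S = (THE m. m \<in> S \<and> (\<forall>x\<in>S. le m x))"

end

theory Submission
  imports Defs
begin

text \<open>
  Fix a basis, i.e. representatives \<open>a\<^sub>i \<in> E\<^sub>i\<close>. The middle one is matched with
  \<open>-a\<^sub>k \<in> E'\<^sub>k\<close>, since \<open>0 \<notin> E\<close>. Take a positive \<open>a\<^sub>i\<close>, \<open>i > k\<close>, and call a positive block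
  \<open>E'\<^sub>j\<close> blocked if \<open>a\<^sub>i + E'\<^sub>j \<subseteq> E\<close>. Translation by positive elements increases, so the
  translates \<open>a\<^sub>i + E'\<^sub>j\<close> of the blocked blocks are disjoint sets of elements of \<open>E\<close> above
  \<open>a\<^sub>i\<close>, all of which lie in \<open>E\<^sub>i - {a\<^sub>i}\<close> or in \<open>E\<^sub>l\<close>, \<open>l > i\<close>. These later blocks are the
  smallest positive ones and \<open>|E\<^sub>j| = |E'\<^sub>j|\<close>, so at most \<open>n - i\<close> blocks are blocked and
  \<open>a\<^sub>i\<close> can be matched into at least \<open>i - k\<close> of the \<open>n - k\<close> positive blocks of \<open>N\<close>. Choosing
  greedily for \<open>i = k + 1, \<dots>, n\<close> gives a permutation of the positive blocks; the negative
  blocks are symmetric.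
\<close>

lemma sum_smallest_le_sum:
  fixes s :: "'a \<Rightarrow> 'b::canonically_ordered_monoid_add"
  assumes "finite A" "T \<subseteq> A" "J \<subseteq> A" "card T \<le> card J"
    and smallest: "\<And>t y. t \<in> T \<Longrightarrow> y \<in> A - T \<Longrightarrow> s t \<le> s y"
  shows "sum s T \<le> sum s J"
proof -
  have fin: "finite T" "finite J" using assms finite_subset by auto
  have "card (T - J) \<le> card (J - T)"
    using fin \<open>card T \<le> card J\<close> card_Int_Diff[of T J] card_Int_Diff[of J T]
    by (simp add: Int_commute)
  then obtain g where g: "g ` (T - J) \<subseteq> J - T" "inj_on g (T - J)"
    using card_le_inj fin by (metis finite_Diff)
  have "sum s (T - J) \<le> sum (s \<circ> g) (T - J)"
    by (rule sum_mono) (use g smallest \<open>J \<subseteq> A\<close> in auto)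
  also have "\<dots> = sum s (g ` (T - J))" by (simp add: sum.reindex g(2))
  also have "\<dots> \<le> sum s (J - T)" by (rule sum_mono2) (use fin g in auto)
  finally have "sum s (T \<inter> J) + sum s (T - J) \<le> sum s (J \<inter> T) + sum s (J - T)"
    by (simp add: Int_commute add_left_mono)
  then show ?thesis using fin sum.Int_Diff by metis
qed

lemma exists_inj_choice_of_card_ge_index:
  assumes "finite C" and "\<forall>r\<in>{1..m}. r \<le> card {j\<in>C. A r j}"
  shows "\<exists>\<sigma>. inj_on \<sigma> {1..m} \<and> (\<forall>r\<in>{1..m}. \<sigma> r \<in> C \<and> A r (\<sigma> r))"
  using assms(2)
proof (induction m)
  case 0
  then show ?case by auto
next
  case (Suc m)
  then obtain \<sigma> where \<sigma>: "inj_on \<sigma> {1..m}" "\<forall>r\<in>{1..m}. \<sigma> r \<in> C \<and> A r (\<sigma> r)"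
    by auto
  have "Suc m \<le> card {j\<in>C. A (Suc m) j}" using Suc.prems by simp
  then have fewer: "card (\<sigma> ` {1..m}) < card {j\<in>C. A (Suc m) j}"
    using \<sigma>(1) by (simp add: card_image)
  have "\<not> {j\<in>C. A (Suc m) j} \<subseteq> \<sigma> ` {1..m}"
  proof
    assume "{j\<in>C. A (Suc m) j} \<subseteq> \<sigma> ` {1..m}"
    then have "card {j\<in>C. A (Suc m) j} \<le> card (\<sigma> ` {1..m})" by (simp add: card_mono)
    with fewer show False by simp
  qed
  then obtain j where j: "j \<in> C" "A (Suc m) j" "j \<notin> \<sigma> ` {1..m}" by blast
  define \<tau> where "\<tau> = \<sigma>(Suc m := j)"
  have agree: "\<And>r. r \<in> {1..m} \<Longrightarrow> \<tau> r = \<sigma> r" by (simp add: \<tau>_def)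
  have ins: "{1..Suc m} = insert (Suc m) {1..m}" by auto
  have "inj_on \<tau> {1..m}" unfolding \<tau>_def using \<sigma>(1) j(3) by (rule inj_on_fun_updI)
  moreover have "\<tau> ` {1..m} = \<sigma> ` {1..m}" by (rule image_cong[OF refl agree])
  moreover have \<tau>_new: "\<tau> (Suc m) = j" by (simp add: \<tau>_def)
  ultimately have "inj_on \<tau> {1..Suc m}" unfolding ins using j(3) by simp
  moreover have "\<forall>r\<in>{1..Suc m}. \<tau> r \<in> C \<and> A r (\<tau> r)"
    unfolding ins using \<sigma>(2) j(1,2) agree \<tau>_new by simp
  ultimately show ?case by blast
qed

lemma exists_bij_choice_of_card_ge_rank:
  assumes rank: "bij_betw rank I {1..card I}"
    and deg: "\<forall>i\<in>I. rank i \<le> card {j\<in>I. A i j}"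
  shows "\<exists>\<sigma>. bij_betw \<sigma> I I \<and> (\<forall>i\<in>I. A i (\<sigma> i))"
proof -
  have "finite I" using bij_betw_finite rank by blast
  define row where "row = the_inv_into I rank"
  have row_rank: "row (rank i) = i" if "i \<in> I" for i
    using rank that unfolding row_def bij_betw_def by (simp add: the_inv_into_f_f)
  have "\<forall>r\<in>{1..card I}. r \<le> card {j\<in>I. A (row r) j}"
  proof
    fix r assume "r \<in> {1..card I}"
    then have "r \<in> rank ` I" using bij_betw_imp_surj_on[OF rank] by simp
    then obtain i where "i \<in> I" "r = rank i" by blast
    then show "r \<le> card {j\<in>I. A (row r) j}" using deg row_rank by simp
  qed
  then obtain \<tau> where \<tau>: "inj_on \<tau> {1..card I}" "\<forall>r\<in>{1..card I}. \<tau> r \<in> I \<and> A (row r) (\<tau> r)"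
    using exists_inj_choice_of_card_ge_index[OF \<open>finite I\<close>, of "card I" "\<lambda>r. A (row r)"] by blast
  have "inj_on (\<tau> \<circ> rank) I"
    using rank \<tau>(1) by (simp add: bij_betw_def comp_inj_on)
  moreover have "(\<tau> \<circ> rank) ` I \<subseteq> I" using rank \<tau>(2) by (auto simp: bij_betw_def)
  ultimately have "bij_betw (\<tau> \<circ> rank) I I"
    unfolding bij_betw_def by (intro conjI endo_inj_surj[OF \<open>finite I\<close>])
  moreover have "A i ((\<tau> \<circ> rank) i)" if "i \<in> I" for i
    using \<tau>(2) bij_betw_apply[OF rank that] row_rank[OF that] by force
  ultimately show ?thesis by blast
qed

lemma card_rank_ge:
  assumes rank: "bij_betw rank I {1..card I}" and i: "i \<in> I"
  shows "card {l\<in>I. rank i \<le> rank l} = card I + 1 - rank i"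
proof -
  have "rank ` {l\<in>I. rank i \<le> rank l} = {rank i..card I}"
  proof
    show "rank ` {l\<in>I. rank i \<le> rank l} \<subseteq> {rank i..card I}"
      using bij_betw_apply[OF rank] by auto
    show "{rank i..card I} \<subseteq> rank ` {l\<in>I. rank i \<le> rank l}"
    proof
      fix r assume r: "r \<in> {rank i..card I}"
      then have "r \<in> rank ` I" using bij_betw_apply[OF rank i] bij_betw_imp_surj_on[OF rank] by auto
      then show "r \<in> rank ` {l\<in>I. rank i \<le> rank l}" using r by auto
    qed
  qed
  moreover have "inj_on rank {l\<in>I. rank i \<le> rank l}"
    using rank by (auto simp: bij_betw_def intro: inj_on_subset)
  ultimately show ?thesis by (metis card_image card_atLeastAtMost Suc_eq_plus1)
qed

text \<open>
  Used twice: for the blocks above the middle one with \<open>rank i = i - k\<close> and \<open>lt\<close> the order,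
  and for the blocks below it with \<open>rank i = k - i\<close> and \<open>lt\<close> the reversed order.
\<close>

lemma card_matchable_blocks_ge_rank:
  fixes P Q :: "'i \<Rightarrow> 'a::ab_group_add set" and rank :: "'i \<Rightarrow> nat"
  assumes rank: "bij_betw rank I {1..card I}"
    and fin: "\<forall>j\<in>I. finite (P j) \<and> finite (Q j) \<and> card (P j) \<le> card (Q j)"
    and disj: "\<forall>j\<in>I. \<forall>j'\<in>I. j \<noteq> j' \<longrightarrow> Q j \<inter> Q j' = {}"
    and decr: "\<forall>j\<in>I. \<forall>j'\<in>I. rank j < rank j' \<longrightarrow> card (P j') \<le> card (P j)"
    and i: "i \<in> I" and a: "a \<in> P i"
    and above: "\<And>e. e \<in> E \<Longrightarrow> lt a e \<Longrightarrow> e \<in> P i - {a} \<or> (\<exists>l\<in>I. rank i < rank l \<and> e \<in> P l)"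
    and shift: "\<And>j b. j \<in> I \<Longrightarrow> b \<in> Q j \<Longrightarrow> lt a (a + b)"
  shows "rank i \<le> card {j\<in>I. \<exists>b\<in>Q j. a + b \<notin> E}"
proof -
  have "finite I" using bij_betw_finite rank by blast
  define J where "J = {j\<in>I. \<forall>b\<in>Q j. a + b \<in> E}"
  define L where "L = {l\<in>I. rank i \<le> rank l}"
  define U where "U = {e\<in>E. lt a e}"
  have "finite L" "i \<in> L" using \<open>finite I\<close> i by (auto simp: L_def)
  have U_sub: "U \<subseteq> (P i - {a}) \<union> (\<Union>l\<in>L - {i}. P l)"
    using above by (fastforce simp: U_def L_def)
  have fin_R: "finite ((P i - {a}) \<union> (\<Union>l\<in>L - {i}. P l))"
    using fin \<open>finite L\<close> i by (auto simp: L_def)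
  have "0 < card (P i)" using a fin i card_gt_0_iff by blast
  have "card U \<le> card (P i - {a}) + card (\<Union>l\<in>L - {i}. P l)"
    using card_mono[OF fin_R U_sub] card_Un_le order_trans by blast
  also have "\<dots> \<le> (card (P i) - 1) + (\<Sum>l\<in>L - {i}. card (P l))"
    using a fin i card_UN_le[of "L - {i}" P] \<open>finite L\<close> by simp
  also have "\<dots> < (\<Sum>l\<in>L. card (P l))"
    using sum.remove[OF \<open>finite L\<close> \<open>i \<in> L\<close>, of "\<lambda>l. card (P l)"] \<open>0 < card (P i)\<close> by simp
  finally have U_small: "card U < (\<Sum>l\<in>L. card (P l))" .
  have "(\<Sum>j\<in>J. card (P j)) \<le> (\<Sum>j\<in>J. card (Q j))"
    using fin by (intro sum_mono) (auto simp: J_def)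
  also have "\<dots> = card (\<Union>j\<in>J. Q j)"
    using fin disj \<open>finite I\<close> by (intro card_UN_disjoint[symmetric]) (auto simp: J_def)
  also have "\<dots> = card ((+) a ` (\<Union>j\<in>J. Q j))" by (simp add: card_image)
  also have "\<dots> \<le> card U"
    using shift finite_subset[OF U_sub fin_R] by (intro card_mono) (auto simp: U_def J_def)
  finally have J_small: "(\<Sum>j\<in>J. card (P j)) \<le> card U" .
  txt \<open>\<open>L\<close> consists of the \<open>card L\<close> smallest blocks, whose sizes already add up to more than \<open>card U\<close>.\<close>
  have "card J < card L"
  proof (rule ccontr)
    assume "\<not> card J < card L"
    then have "(\<Sum>l\<in>L. card (P l)) \<le> (\<Sum>j\<in>J. card (P j))"
      using decr by (intro sum_smallest_le_sum[OF \<open>finite I\<close>]) (auto simp: L_def J_def)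
    then show False using J_small U_small by linarith
  qed
  moreover have "card L = card I + 1 - rank i"
    unfolding L_def using rank i by (rule card_rank_ge)
  moreover have "1 \<le> rank i" "rank i \<le> card I" using bij_betw_apply[OF rank i] by auto
  ultimately have "rank i \<le> card I - card J" by linarith
  moreover have "{j\<in>I. \<exists>b\<in>Q j. a + b \<notin> E} = I - J" by (auto simp: J_def)
  moreover have "card (I - J) = card I - card J"
    using \<open>finite I\<close> by (intro card_Diff_subset) (auto simp: J_def)
  ultimately show ?thesis by simp
qed

lemma tm_basis_iff:
  assumes part: "\<forall>i\<in>{1..n}. finite (P i) \<and> P i \<noteq> {}"
    and disj: "\<forall>i\<in>{1..n}. \<forall>j\<in>{1..n}. i \<noteq> j \<longrightarrow> P i \<inter> P j = {}"
  shows "tm_basis n P B \<longleftrightarrow> B \<subseteq> tm_ground n P \<and> (\<forall>i\<in>{1..n}. card (B \<inter> P i) = 1)"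
proof
  assume "tm_basis n P B"
  then have indep: "tm_indep n P B" and maximal: "\<And>Y. tm_indep n P Y \<Longrightarrow> B \<subseteq> Y \<Longrightarrow> Y = B"
    unfolding tm_basis_def by auto
  have "card (B \<inter> P i) = 1" if i: "i \<in> {1..n}" for i
  proof (rule ccontr)
    assume "card (B \<inter> P i) \<noteq> 1"
    moreover have "card (B \<inter> P i) \<le> 1" using indep i by (simp add: tm_indep_def)
    ultimately have "card (B \<inter> P i) = 0" by simp
    then have empty: "B \<inter> P i = {}" using part i by simp
    obtain x where x: "x \<in> P i" using part i by blast
    have "tm_indep n P (insert x B)"
      unfolding tm_indep_def
    proof (intro conjI ballI)
      show "insert x B \<subseteq> tm_ground n P" using indep x i by (auto simp: tm_indep_def tm_ground_def)
      fix j assume j: "j \<in> {1..n}"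
      show "card (insert x B \<inter> P j) \<le> 1"
      proof (cases "j = i")
        case True
        then have "insert x B \<inter> P j = {x}" using empty x by auto
        then show ?thesis by simp
      next
        case False
        then have "x \<notin> P j" using disj x i j by blast
        then show ?thesis using indep j by (simp add: tm_indep_def)
      qed
    qed
    then have "insert x B = B" using maximal by blast
    then show False using empty x by blast
  qed
  then show "B \<subseteq> tm_ground n P \<and> (\<forall>i\<in>{1..n}. card (B \<inter> P i) = 1)"
    using indep by (simp add: tm_indep_def)
next
  assume B: "B \<subseteq> tm_ground n P \<and> (\<forall>i\<in>{1..n}. card (B \<inter> P i) = 1)"
  have absorbed: "y \<in> B" if Y: "tm_indep n P Y" "B \<subseteq> Y" and y: "y \<in> Y" for Y y
  proof -
    obtain i where i: "i \<in> {1..n}" "y \<in> P i"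
      using Y(1) y by (auto simp: tm_indep_def tm_ground_def)
    have "card (B \<inter> P i) = 1" using B i(1) by blast
    then obtain z where z: "B \<inter> P i = {z}" by (rule card_1_singletonE)
    have "{y, z} \<subseteq> Y \<inter> P i" using y i(2) z Y(2) by blast
    then have "card {y, z} \<le> card (Y \<inter> P i)" using part i(1) by (intro card_mono) auto
    also have "\<dots> \<le> 1" using Y(1) i(1) by (simp add: tm_indep_def)
    finally have "y = z" by (simp add: card_insert_if split: if_splits)
    then show "y \<in> B" using z by blast
  qed
  show "tm_basis n P B"
    unfolding tm_basis_def
  proof (intro conjI allI impI)
    show "tm_indep n P B" using B by (simp add: tm_indep_def)
    fix Y assume "tm_indep n P Y \<and> B \<subseteq> Y"
    then show "Y = B" using absorbed by blast
  qed
qed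

lemma tm_basis_obtain_representatives:
  assumes part: "\<forall>i\<in>{1..n}. finite (P i) \<and> P i \<noteq> {}"
    and disj: "\<forall>i\<in>{1..n}. \<forall>j\<in>{1..n}. i \<noteq> j \<longrightarrow> P i \<inter> P j = {}"
    and B: "tm_basis n P B"
  obtains a where "bij_betw a {1..n} B" "\<forall>i\<in>{1..n}. a i \<in> P i"
proof -
  have B': "B \<subseteq> tm_ground n P" "\<forall>i\<in>{1..n}. \<exists>x. B \<inter> P i = {x}"
    using B tm_basis_iff[OF part disj] by (auto simp: card_1_singleton_iff)
  then obtain a where a: "\<And>i. i \<in> {1..n} \<Longrightarrow> B \<inter> P i = {a i}" by metis
  then have a_in: "a i \<in> B \<inter> P i" if "i \<in> {1..n}" for i using that by simp
  have "inj_on a {1..n}"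
  proof (rule inj_onI)
    fix i j assume ij: "i \<in> {1..n}" "j \<in> {1..n}" and "a i = a j"
    have "a i \<in> P i" "a j \<in> P j" using a_in ij by auto
    then have "a i \<in> P i \<inter> P j" using \<open>a i = a j\<close> by simp
    then show "i = j" using disj ij by blast
  qed
  moreover have "B \<subseteq> a ` {1..n}"
  proof
    fix x assume "x \<in> B"
    then obtain i where i: "i \<in> {1..n}" "x \<in> P i" using B'(1) by (auto simp: tm_ground_def)
    then have "x = a i" using a[OF i(1)] \<open>x \<in> B\<close> by blast
    then show "x \<in> a ` {1..n}" using i(1) by blast
  qed
  moreover have "a ` {1..n} \<subseteq> B" using a_in by blast
  ultimately have "bij_betw a {1..n} B" unfolding bij_betw_def by blast
  moreover have "\<forall>i\<in>{1..n}. a i \<in> P i" using a_in by blast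
  ultimately show ?thesis by (rule that)
qed

lemma tm_basis_image_permutation:
  assumes part: "\<forall>i\<in>{1..n}. finite (P i) \<and> P i \<noteq> {}"
    and disj: "\<forall>i\<in>{1..n}. \<forall>j\<in>{1..n}. i \<noteq> j \<longrightarrow> P i \<inter> P j = {}"
    and \<sigma>: "bij_betw \<sigma> {1..n} {1..n}" and b: "\<forall>i\<in>{1..n}. b i \<in> P (\<sigma> i)"
  shows "tm_basis n P (b ` {1..n})" and "inj_on b {1..n}"
proof -
  have \<sigma>_in: "\<sigma> i \<in> {1..n}" if "i \<in> {1..n}" for i using bij_betw_apply[OF \<sigma> that] .
  have same_block: "i = i'" if "i \<in> {1..n}" "i' \<in> {1..n}" "b i \<in> P (\<sigma> i')" for i i'
  proof -
    have "b i \<in> P (\<sigma> i)" using b that(1) by blast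
    with that(3) have "P (\<sigma> i) \<inter> P (\<sigma> i') \<noteq> {}" by blast
    then have "\<sigma> i = \<sigma> i'" using disj \<sigma>_in[OF that(1)] \<sigma>_in[OF that(2)] by blast
    then show ?thesis using inj_on_eq_iff[OF bij_betw_imp_inj_on[OF \<sigma>] that(1,2)] by blast
  qed
  show "inj_on b {1..n}"
  proof (rule inj_onI)
    fix i i' assume "i \<in> {1..n}" "i' \<in> {1..n}" "b i = b i'"
    moreover from this have "b i \<in> P (\<sigma> i')" using b by simp
    ultimately show "i = i'" by (intro same_block)
  qed
  have block: "b ` {1..n} \<inter> P (\<sigma> i) = {b i}" if i: "i \<in> {1..n}" for i
  proof
    show "{b i} \<subseteq> b ` {1..n} \<inter> P (\<sigma> i)" using b i by blast
    show "b ` {1..n} \<inter> P (\<sigma> i) \<subseteq> {b i}"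
    proof
      fix x assume "x \<in> b ` {1..n} \<inter> P (\<sigma> i)"
      then obtain i' where "i' \<in> {1..n}" "x = b i'" "b i' \<in> P (\<sigma> i)" by blast
      moreover from this have "i' = i" using i by (intro same_block)
      ultimately show "x \<in> {b i}" by simp
    qed
  qed
  have "card (b ` {1..n} \<inter> P j) = 1" if "j \<in> {1..n}" for j
  proof -
    have "j \<in> \<sigma> ` {1..n}" using bij_betw_imp_surj_on[OF \<sigma>] that by simp
    then obtain i where "i \<in> {1..n}" "j = \<sigma> i" by blast
    then show ?thesis using block by simp
  qed
  moreover have "b ` {1..n} \<subseteq> tm_ground n P" using b \<sigma>_in unfolding tm_ground_def by blast
  ultimately show "tm_basis n P (b ` {1..n})" using tm_basis_iff[OF part disj] by blast
qed

lemma tm_rank_eq: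
  assumes part: "\<forall>i\<in>{1..n}. finite (P i) \<and> P i \<noteq> {}"
    and disj: "\<forall>i\<in>{1..n}. \<forall>j\<in>{1..n}. i \<noteq> j \<longrightarrow> P i \<inter> P j = {}"
  shows "tm_rank n P = n"
proof -
  have card_le: "card X \<le> n" if X: "tm_indep n P X" for X
  proof -
    have "X = (\<Union>i\<in>{1..n}. X \<inter> P i)" using X by (auto simp: tm_indep_def tm_ground_def)
    then have "card X \<le> (\<Sum>i\<in>{1..n}. card (X \<inter> P i))" by (metis card_UN_le finite_atLeastAtMost)
    also have "\<dots> \<le> (\<Sum>i\<in>{1..n}. 1)" using X by (intro sum_mono) (simp add: tm_indep_def)
    finally show ?thesis by simp
  qed
  have "\<forall>i\<in>{1..n}. \<exists>x. x \<in> P i" using part by blast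
  then obtain c where c: "\<forall>i\<in>{1..n}. c i \<in> P i" by metis
  have "tm_basis n P (c ` {1..n})" and c_inj: "inj_on c {1..n}"
    using tm_basis_image_permutation[OF part disj bij_betw_id] c by simp_all
  then have "tm_indep n P (c ` {1..n})" "card (c ` {1..n}) = n"
    by (simp_all add: tm_basis_def card_image)
  then have "n \<in> card ` {X. tm_indep n P X}" by (metis image_eqI mem_Collect_eq)
  moreover have "finite (card ` {X. tm_indep n P X})"
    by (rule finite_subset[of _ "{..n}"]) (auto dest: card_le)
  ultimately show ?thesis unfolding tm_rank_def using card_le by (intro Max_eqI) auto
qed

lemma tm_matched_if_permutations:
  assumes part_P: "\<forall>i\<in>{1..n}. finite (P i) \<and> P i \<noteq> {}"
    and disj_P: "\<forall>i\<in>{1..n}. \<forall>j\<in>{1..n}. i \<noteq> j \<longrightarrow> P i \<inter> P j = {}"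
    and part_Q: "\<forall>i\<in>{1..n}. finite (Q i) \<and> Q i \<noteq> {}"
    and disj_Q: "\<forall>i\<in>{1..n}. \<forall>j\<in>{1..n}. i \<noteq> j \<longrightarrow> Q i \<inter> Q j = {}"
    and "0 < n"
    and perm: "\<And>a. \<forall>i\<in>{1..n}. a i \<in> P i \<Longrightarrow> \<exists>\<sigma>. bij_betw \<sigma> {1..n} {1..n} \<and>
                 (\<forall>i\<in>{1..n}. \<exists>b\<in>Q (\<sigma> i). a i + b \<notin> tm_ground n P)"
  shows "tm_matched n P n Q"
  unfolding tm_matched_def
proof (intro conjI allI impI)
  show "tm_rank n P = tm_rank n Q" "0 < tm_rank n P"
    using tm_rank_eq[OF part_P disj_P] tm_rank_eq[OF part_Q disj_Q] \<open>0 < n\<close> by simp_all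
next
  fix B assume "tm_basis n P B"
  then obtain a where a: "bij_betw a {1..n} B" "\<forall>i\<in>{1..n}. a i \<in> P i"
    using tm_basis_obtain_representatives[OF part_P disj_P] by metis
  obtain \<sigma> where \<sigma>: "bij_betw \<sigma> {1..n} {1..n}"
    and "\<forall>i\<in>{1..n}. \<exists>b\<in>Q (\<sigma> i). a i + b \<notin> tm_ground n P"
    using perm a(2) by blast
  then obtain b where b: "\<forall>i\<in>{1..n}. b i \<in> Q (\<sigma> i) \<and> a i + b i \<notin> tm_ground n P"
    by metis
  have basis: "tm_basis n Q (b ` {1..n})" and "inj_on b {1..n}"
    using tm_basis_image_permutation[OF part_Q disj_Q \<sigma>] b by auto
  define f where "f = b \<circ> the_inv_into {1..n} a"
  have "bij_betw f B (b ` {1..n})"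
    unfolding f_def using bij_betw_the_inv_into[OF a(1)] inj_on_imp_bij_betw[OF \<open>inj_on b {1..n}\<close>]
    by (rule bij_betw_trans)
  moreover have "x + f x \<notin> tm_ground n P" if "x \<in> B" for x
  proof -
    obtain i where "i \<in> {1..n}" "x = a i" using a(1) \<open>x \<in> B\<close> by (auto simp: bij_betw_def)
    then show ?thesis using a(1) b by (simp add: f_def bij_betw_def the_inv_into_f_f)
  qed
  ultimately show "\<exists>B' f. tm_basis n Q B' \<and> bij_betw f B B' \<and> (\<forall>x\<in>B. x + f x \<notin> tm_ground n P)"
    using basis by blast
qed

lemma compatible_on_strict:
  assumes "compatible_on S le" "x \<in> S" "y \<in> S" "c \<in> S" "strict le x y"
  shows "strict le (x + c) (y + c)"
  using assms by (auto simp: compatible_on_def strict_def)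

locale signed_blocks =
  fixes n k :: nat and P Q :: "nat \<Rightarrow> 'a::ab_group_add set" and le :: "'a \<Rightarrow> 'a \<Rightarrow> bool"
  assumes part_P: "\<forall>i\<in>{1..n}. finite (P i) \<and> P i \<noteq> {}"
    and part_Q: "\<forall>i\<in>{1..n}. finite (Q i) \<and> Q i \<noteq> {}"
    and disj_Q: "\<forall>i\<in>{1..n}. \<forall>j\<in>{1..n}. i \<noteq> j \<longrightarrow> Q i \<inter> Q j = {}"
    and same_card: "\<forall>i\<in>{1..n}. card (P i) = card (Q i)"
    and order: "total_order_on (tm_ground n P \<union> tm_ground n Q \<union>
                  sumset (tm_ground n P) (tm_ground n Q) \<union> {0}) le"
    and compat: "compatible_on (tm_ground n P \<union> tm_ground n Q \<union>
                  sumset (tm_ground n P) (tm_ground n Q) \<union> {0}) le"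
    and k: "k \<in> {1..n}"
    and neg: "\<forall>i\<in>{1..n}. i < k \<longrightarrow> negative_set le (P i) \<and> negative_set le (Q i)"
    and pos: "\<forall>i\<in>{1..n}. k < i \<longrightarrow> positive_set le (P i) \<and> positive_set le (Q i)"
    and zero_notin_middle: "0 \<notin> P k"
    and middle: "P k = uminus ` Q k"
    and card_decr: "\<forall>i\<in>{1..n}. \<forall>j\<in>{1..n}. (k < i \<and> i < j) \<or> (j < i \<and> i < k)
                      \<longrightarrow> card (P i) > card (P j)"
    and P_increasing: "\<forall>i\<in>{1..n}. \<forall>j\<in>{1..n}. i < j \<longrightarrow> set_less le (P i) (P j)"
begin

lemma zero_notin_ground: "0 \<notin> tm_ground n P"
proof
  assume "0 \<in> tm_ground n P"
  then obtain i where "i \<in> {1..n}" "0 \<in> P i" by (auto simp: tm_ground_def)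
  then show False
    using neg pos zero_notin_middle
    by (cases i k rule: linorder_cases) (auto simp: negative_set_def positive_set_def strict_def)
qed

lemma block_index_le:
  assumes "i \<in> {1..n}" "l \<in> {1..n}" "a \<in> P i" "e \<in> P l" "strict le a e"
  shows "i \<le> l"
proof (rule ccontr)
  assume "\<not> i \<le> l"
  then have "set_less le (P l) (P i)" using P_increasing assms(1,2) by auto
  then have "strict le e a" using assms(3,4) by (simp add: set_less_def)
  moreover have "a \<in> tm_ground n P" "e \<in> tm_ground n P"
    using assms(1-4) by (auto simp: tm_ground_def)
  ultimately show False
    using order \<open>strict le a e\<close> unfolding total_order_on_def strict_def by blast
qed

lemma strict_translate:
  assumes "x \<in> insert 0 (tm_ground n Q)" "y \<in> insert 0 (tm_ground n Q)" "a \<in> tm_ground n P"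
    and "strict le x y"
  shows "strict le (a + x) (a + y)"
  using compatible_on_strict[OF compat, of x y a] assms by (auto simp: add.commute)

lemma positive_blocks_permutation:
  assumes a: "\<forall>i\<in>{k<..n}. a i \<in> P i"
  shows "\<exists>\<sigma>. bij_betw \<sigma> {k<..n} {k<..n} \<and>
           (\<forall>i\<in>{k<..n}. \<exists>b\<in>Q (\<sigma> i). a i + b \<notin> tm_ground n P)"
proof (rule exists_bij_choice_of_card_ge_rank)
  show rank: "bij_betw (\<lambda>i. i - k) {k<..n} {1..card {k<..n}}"
    by (rule bij_betw_byWitness[where f'="\<lambda>r. r + k"]) auto
  show "\<forall>i\<in>{k<..n}. i - k \<le> card {j\<in>{k<..n}. \<exists>b\<in>Q j. a i + b \<notin> tm_ground n P}"
  proof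
    fix i assume i: "i \<in> {k<..n}"
    have a_i: "a i \<in> P i" using a i by blast
    have "i \<in> {1..n}" using i k by auto
    then have a_i_ground: "a i \<in> tm_ground n P" using a_i unfolding tm_ground_def by blast
    show "i - k \<le> card {j\<in>{k<..n}. \<exists>b\<in>Q j. a i + b \<notin> tm_ground n P}"
    proof (rule card_matchable_blocks_ge_rank[OF rank, where P = P and lt = "strict le"])
      show "\<forall>j\<in>{k<..n}. finite (P j) \<and> finite (Q j) \<and> card (P j) \<le> card (Q j)"
        using part_P part_Q same_card k by auto
      show "\<forall>j\<in>{k<..n}. \<forall>j'\<in>{k<..n}. j \<noteq> j' \<longrightarrow> Q j \<inter> Q j' = {}"
        using disj_Q k by auto
      show "\<forall>j\<in>{k<..n}. \<forall>j'\<in>{k<..n}. j - k < j' - k \<longrightarrow> card (P j') \<le> card (P j)"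
        using card_decr k by (auto intro: less_imp_le)
      show "i \<in> {k<..n}" "a i \<in> P i" by fact+
    next
      fix e assume e: "e \<in> tm_ground n P" "strict le (a i) e"
      then obtain l where l: "l \<in> {1..n}" "e \<in> P l" by (auto simp: tm_ground_def)
      then have "i \<le> l" using block_index_le[OF _ _ a_i] i k e(2) by auto
      then show "e \<in> P i - {a i} \<or> (\<exists>l\<in>{k<..n}. i - k < l - k \<and> e \<in> P l)"
        using l i e(2) by (cases "l = i") (auto simp: strict_def)
    next
      fix j b assume j: "j \<in> {k<..n}" and b: "b \<in> Q j"
      then have "strict le 0 b" using pos k by (auto simp: positive_set_def)
      moreover have "b \<in> tm_ground n Q" using j b k unfolding tm_ground_def by auto
      ultimately show "strict le (a i) (a i + b)"
        using strict_translate[of 0 b "a i"] a_i_ground by simp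
    qed
  qed
qed

lemma negative_blocks_permutation:
  assumes a: "\<forall>i\<in>{1..<k}. a i \<in> P i"
  shows "\<exists>\<sigma>. bij_betw \<sigma> {1..<k} {1..<k} \<and>
           (\<forall>i\<in>{1..<k}. \<exists>b\<in>Q (\<sigma> i). a i + b \<notin> tm_ground n P)"
proof (rule exists_bij_choice_of_card_ge_rank)
  show rank: "bij_betw (\<lambda>i. k - i) {1..<k} {1..card {1..<k}}"
    by (rule bij_betw_byWitness[where f'="\<lambda>r. k - r"]) auto
  show "\<forall>i\<in>{1..<k}. k - i \<le> card {j\<in>{1..<k}. \<exists>b\<in>Q j. a i + b \<notin> tm_ground n P}"
  proof
    fix i assume i: "i \<in> {1..<k}"
    have a_i: "a i \<in> P i" using a i by blast
    have "i \<in> {1..n}" using i k by auto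
    then have a_i_ground: "a i \<in> tm_ground n P" using a_i unfolding tm_ground_def by blast
    show "k - i \<le> card {j\<in>{1..<k}. \<exists>b\<in>Q j. a i + b \<notin> tm_ground n P}"
    proof (rule card_matchable_blocks_ge_rank[OF rank, where P = P and lt = "\<lambda>x y. strict le y x"])
      show "\<forall>j\<in>{1..<k}. finite (P j) \<and> finite (Q j) \<and> card (P j) \<le> card (Q j)"
        using part_P part_Q same_card k by auto
      show "\<forall>j\<in>{1..<k}. \<forall>j'\<in>{1..<k}. j \<noteq> j' \<longrightarrow> Q j \<inter> Q j' = {}"
        using disj_Q k by auto
      show "\<forall>j\<in>{1..<k}. \<forall>j'\<in>{1..<k}. k - j < k - j' \<longrightarrow> card (P j') \<le> card (P j)"
        using card_decr k by (auto intro: less_imp_le)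
      show "i \<in> {1..<k}" "a i \<in> P i" by fact+
    next
      fix e assume e: "e \<in> tm_ground n P" "strict le e (a i)"
      then obtain l where l: "l \<in> {1..n}" "e \<in> P l" by (auto simp: tm_ground_def)
      then have "l \<le> i" using block_index_le[OF _ _ _ a_i] i k e(2) by auto
      then show "e \<in> P i - {a i} \<or> (\<exists>l\<in>{1..<k}. k - i < k - l \<and> e \<in> P l)"
        using l i e(2) by (cases "l = i") (auto simp: strict_def)
    next
      fix j b assume j: "j \<in> {1..<k}" and b: "b \<in> Q j"
      then have "strict le b 0" using neg k by (auto simp: negative_set_def)
      moreover have "b \<in> tm_ground n Q" using j b k unfolding tm_ground_def by auto
      ultimately show "strict le (a i + b) (a i)"
        using strict_translate[of b 0 "a i"] a_i_ground by simp
    qed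
  qed
qed

lemma exists_matching_permutation:
  assumes a: "\<forall>i\<in>{1..n}. a i \<in> P i"
  shows "\<exists>\<sigma>. bij_betw \<sigma> {1..n} {1..n} \<and>
           (\<forall>i\<in>{1..n}. \<exists>b\<in>Q (\<sigma> i). a i + b \<notin> tm_ground n P)"
proof -
  obtain \<sigma>\<^sub>n\<^sub>e\<^sub>g where neg: "bij_betw \<sigma>\<^sub>n\<^sub>e\<^sub>g {1..<k} {1..<k}"
      "\<forall>i\<in>{1..<k}. \<exists>b\<in>Q (\<sigma>\<^sub>n\<^sub>e\<^sub>g i). a i + b \<notin> tm_ground n P"
    using negative_blocks_permutation a k by force
  obtain \<sigma>\<^sub>p\<^sub>o\<^sub>s where pos: "bij_betw \<sigma>\<^sub>p\<^sub>o\<^sub>s {k<..n} {k<..n}"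
      "\<forall>i\<in>{k<..n}. \<exists>b\<in>Q (\<sigma>\<^sub>p\<^sub>o\<^sub>s i). a i + b \<notin> tm_ground n P"
    using positive_blocks_permutation a k by force
  define \<sigma> where "\<sigma> i = (if i < k then \<sigma>\<^sub>n\<^sub>e\<^sub>g i else if i = k then k else \<sigma>\<^sub>p\<^sub>o\<^sub>s i)" for i
  have "bij_betw \<sigma> ({1..<k} \<union> {k} \<union> {k<..n}) ({1..<k} \<union> {k} \<union> {k<..n})"
  proof (intro bij_betw_combine)
    show "bij_betw \<sigma> {1..<k} {1..<k}"
      using neg(1) by (rule bij_betw_cong[THEN iffD1, rotated]) (simp add: \<sigma>_def)
    show "bij_betw \<sigma> {k} {k}" by (simp add: \<sigma>_def)
    show "bij_betw \<sigma> {k<..n} {k<..n}"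
      using pos(1) by (rule bij_betw_cong[THEN iffD1, rotated]) (simp add: \<sigma>_def)
  qed auto
  moreover have "{1..<k} \<union> {k} \<union> {k<..n} = {1..n}" using k by auto
  ultimately have "bij_betw \<sigma> {1..n} {1..n}" by simp
  moreover have "\<exists>b\<in>Q k. a k + b \<notin> tm_ground n P"
  proof -
    have "a k \<in> uminus ` Q k" using a k middle by auto
    then obtain b where "b \<in> Q k" "a k = - b" by blast
    then show ?thesis using zero_notin_ground by (intro bexI[of _ b]) auto
  qed
  then have "\<exists>b\<in>Q (\<sigma> i). a i + b \<notin> tm_ground n P" if "i \<in> {1..n}" for i
    using that neg(2) pos(2) by (cases i k rule: linorder_cases) (auto simp: \<sigma>_def)
  ultimately show ?thesis by blast
qed

end

theorem theorem2p16:
  fixes n k :: nat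
    and P Q :: "nat \<Rightarrow> 'a::ab_group_add set"
    and le :: "'a \<Rightarrow> 'a \<Rightarrow> bool"
  assumes part_P: "\<forall>i\<in>{1..n}. finite (P i) \<and> P i \<noteq> {}"
      and disj_P: "\<forall>i\<in>{1..n}. \<forall>j\<in>{1..n}. i \<noteq> j \<longrightarrow> P i \<inter> P j = {}"
      and part_Q: "\<forall>i\<in>{1..n}. finite (Q i) \<and> Q i \<noteq> {}"
      and disj_Q: "\<forall>i\<in>{1..n}. \<forall>j\<in>{1..n}. i \<noteq> j \<longrightarrow> Q i \<inter> Q j = {}"
      and same_card: "\<forall>i\<in>{1..n}. card (P i) = card (Q i)"
      and order: "total_order_on (tm_ground n P \<union> tm_ground n Q \<union>
                     sumset (tm_ground n P) (tm_ground n Q) \<union> {0}) le"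
      and compat: "compatible_on (tm_ground n P \<union> tm_ground n Q \<union>
                     sumset (tm_ground n P) (tm_ground n Q) \<union> {0}) le"
      and k: "k \<in> {1..n}"
      and c1a_neg: "\<forall>i\<in>{1..n}. i < k \<longrightarrow> negative_set le (P i) \<and> negative_set le (Q i)"
      and c1a_pos: "\<forall>i\<in>{1..n}. k < i \<longrightarrow> positive_set le (P i) \<and> positive_set le (Q i)"
      and c1a_k: "positive_set le (P k)"
      and c1b: "P k = uminus ` (Q k)"
      and c1c: "\<forall>i\<in>{1..n}. \<forall>j\<in>{1..n}. (k < i \<and> i < j) \<or> (j < i \<and> i < k)
                   \<longrightarrow> card (P i) > card (P j)"
      and c2: "\<forall>i\<in>{1..n}. \<forall>j\<in>{1..n}. i < j \<longrightarrow>
                   set_less le (P i) (P j) \<and> set_less le (Q i) (Q j)"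
      and c3_max: "k = n \<or> le (ord_max le (tm_ground n P)) (ord_max le (tm_ground n Q))"
      and c3_min: "k = 1 \<or> le (ord_min le (tm_ground n Q)) (ord_min le (tm_ground n P))"
  shows "tm_matched n P n Q"
proof -
  interpret signed_blocks n k P Q le
  proof
    show "0 \<notin> P k" using c1a_k by (auto simp: positive_set_def strict_def)
    show "\<forall>i\<in>{1..n}. \<forall>j\<in>{1..n}. i < j \<longrightarrow> set_less le (P i) (P j)" using c2 by blast
  qed fact+
  show ?thesis
    using tm_matched_if_permutations[OF part_P disj_P part_Q disj_Q] k exists_matching_permutation
    by auto
qed

end
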